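(* Let $f:\mathcal M\to\mathcal M_0$ satisfy $|f(A)|\le1$ for all $A\in\mathcal M$ and, for each $A\in\mathcal M$, either $f(A)=0$ or $f(A)_{i,j}(1-2A_{i,j})>0$ for all $i,j\in\mathbb K$. For $\varepsilon\ge0$ let $\mathcal X^\varepsilon$ be the MRN over $\Theta$ with transition cocycle $P_{\mathcal X^\varepsilon}(0,\omega)=I_k$ and $P_{\mathcal X^\varepsilon}(n,\omega)=\big(A_{n-1}+\min\{\varepsilon,1\}f(A_{n-1})\big)\cdots\big(A_0+\min\{\varepsilon,1\}f(A_0)\big)$ for $n\ge1$, $\omega=(A_z)_{z\in\mathbb Z}$. Then, up to a $\mu$-null set, $$\Omega^{(1)}:=\{q^{(1)}=0\}=\{\omega=(A_z)_{z\in\mathbb Z}: f(A_{-1})=f(A_{-2})=\dots=f(A_{-N_0^-(\omega)})=0\}.$$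
   Context: Fix $k\ge2$, $\mathbb K=\{1,\dots,k\}$, $S=\{s_1,\dots,s_k\}$, $e_1,\dots,e_k$ the canonical basis of $\mathbb R^k$; $|\cdot|$ is the $\ell^1$-induced matrix norm (max absolute column sum). $\mathcal M$ is the set of $k\times k$ matrices with entries in $\{0,1\}$ having exactly one entry $1$ in each column; $\mathcal M_0$ is the space of real $k\times k$ matrices with all column sums zero. $\nu$ is the uniform probability on $\mathcal M$, $(\Omega,\mathcal F,\mu)=\bigotimes_{z\in\mathbb Z}(\mathcal M,2^{\mathcal M},\nu)$, $\theta$ the left shift $(A_z)_z\mapsto(A_{z+1})_z$. A Markov random network (MRN) over $\Theta=(\Omega,\mathcal F,\mu,\theta)$ is a Markov process on $S\times\Omega$ moving from fibre $S\times\{\theta^n\omega\}$ to $S\times\{\theta^{n+1}\omega\}$, with transition cocycle $P(n,\omega)_{i,j}=\mathbb P\{X_n=(s_i,\theta^n\omega)\mid X_0=(s_j,\omega)\}$. $\mathcal X^0$ is the DRN with $P^0(n,\omega)=A_{n-1}\cdots A_0$; it is synchronized, with synchronization index $J:\Omega\to\mathbb K$ given by $e_{J(\omega)}=\lim_{n\to\infty}A_{-1}\cdots A_{-n}e_1$ ($\mu$-a.e.). $N_0^-(\omega)=\min\{n\in\mathbb N:\operatorname{rank}(A_{-1}A_{-2}\cdots A_{-n})=1\}$ when this set is nonempty, and $N_0^-(\omega)=1$ otherwise; it is a pull-back synchronization time, i.e. $P^0(n,\theta^{-n}\omega)e_j=e_{J(\omega)}$ for all $j$ and $n\ge N_0^-(\omega)$,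 $\mu$-a.e. Let $P^{(1)}(n,\omega)=\frac{d}{d\varepsilon}P_{\mathcal X^\varepsilon}(n,\omega)|_{\varepsilon=0}$ and, for any pull-back synchronization time $N^-$ (e.g. $N_0^-$), $q^{(1)}(\omega)=P^{(1)}(N^-(\omega),\theta^{-N^-(\omega)}\omega)\,e_{J(\theta^{-N^-(\omega)}\omega)}$ (this is $\mu$-a.e. independent of the choice of $N^-$). *)

theory Defs
  imports "HOL-Probability.Probability"
begin

text \<open>Index set K is a finite type 'k; matrices are real^'k^'k, entry A$i$j is row i, column j.\<close>

type_synonym 'k mat = "real^'k^'k"

definition Mset :: "'k::finite mat set" where
  "Mset = {A. (\<forall>i j. A$i$j = 0 \<or> A$i$j = 1) \<and> (\<forall>j. \<exists>!i. A$i$j = 1)}"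

definition M0set :: "'k::finite mat set" where
  "M0set = {A. \<forall>j. (\<Sum>i\<in>UNIV. A$i$j) = 0}"

text \<open>l1-induced matrix norm: maximal absolute column sum.\<close>
definition colnorm :: "'k::finite mat \<Rightarrow> real" where
  "colnorm A = Max (range (\<lambda>j. \<Sum>i\<in>UNIV. \<bar>A$i$j\<bar>))"

definition mu :: "(int \<Rightarrow> 'k::finite mat) measure" where
  "mu = PiM UNIV (\<lambda>_. measure_pmf (pmf_of_set Mset))"

definition shift :: "int \<Rightarrow> (int \<Rightarrow> 'a) \<Rightarrow> (int \<Rightarrow> 'a)" where
  "shift n \<omega> = (\<lambda>z. \<omega> (z + n))"

fun Peps :: "('k::finite mat \<Rightarrow> 'k mat) \<Rightarrow> real \<Rightarrow> nat \<Rightarrow> (int \<Rightarrow> 'k mat) \<Rightarrow> 'k mat" where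
  "Peps f \<epsilon> 0 \<omega> = mat 1"
| "Peps f \<epsilon> (Suc n) \<omega> = (\<omega> (int n) + min \<epsilon> 1 *\<^sub>R f (\<omega> (int n))) ** Peps f \<epsilon> n \<omega>"

definition P1 :: "('k::finite mat \<Rightarrow> 'k mat) \<Rightarrow> nat \<Rightarrow> (int \<Rightarrow> 'k mat) \<Rightarrow> 'k mat" where
  "P1 f n \<omega> = vector_derivative (\<lambda>\<epsilon>. Peps f \<epsilon> n \<omega>) (at 0 within {0..})"

fun backprod :: "(int \<Rightarrow> 'k::finite mat) \<Rightarrow> nat \<Rightarrow> 'k mat" where
  "backprod \<omega> 0 = mat 1"
| "backprod \<omega> (Suc n) = backprod \<omega> n ** \<omega> (- int n - 1)"

text \<open>Synchronization index J, w.r.t. the distinguished first basis vector e(i1).\<close>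
definition Jidx :: "'k::finite \<Rightarrow> (int \<Rightarrow> 'k mat) \<Rightarrow> 'k" where
  "Jidx i1 \<omega> = (THE j. (\<lambda>n. backprod \<omega> n *v axis i1 1) \<longlonglongrightarrow> axis j 1)"

definition N0 :: "(int \<Rightarrow> 'k::finite mat) \<Rightarrow> nat" where
  "N0 \<omega> = (if \<exists>n\<ge>1. rank (backprod \<omega> n) = 1 then LEAST n. n \<ge> 1 \<and> rank (backprod \<omega> n) = 1 else 1)"

definition q1 :: "('k::finite mat \<Rightarrow> 'k mat) \<Rightarrow> 'k \<Rightarrow> (int \<Rightarrow> 'k mat) \<Rightarrow> real^'k" where
  "q1 f i1 \<omega> = (let N = N0 \<omega>; \<omega>' = shift (- int N) \<omega>
                in P1 f N \<omega>' *v axis (Jidx i1 \<omega>') 1)"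

end

theory Submission
  imports Defs
begin

text \<open>Write \<open>\<omega>' = \<theta>\<^sup>-\<^sup>N \<omega>\<close> with \<open>N = N\<^sub>0\<^sup>-(\<omega>)\<close>. Differentiating the product
  defining the cocycle at \<open>\<epsilon> = 0\<close> expresses \<open>q\<^sup>(\<^sup>1\<^sup>)(\<omega>)\<close> as a sum over \<open>m < N\<close> of
  \<open>B\<^sub>m f(A'\<^sub>m) P\<^sub>m e\<^sub>j\<close>, where \<open>B\<^sub>m = A\<^sub>-\<^sub>1 \<cdots> A\<^sub>-\<^sub>r\<close> with \<open>r = N - 1 - m\<close> and
  \<open>P\<^sub>m = A'\<^sub>m\<^sub>-\<^sub>1 \<cdots> A'\<^sub>0\<close> are products of 0/1 matrices with one 1 per column. Look at
  the coordinate \<open>c\<close> with \<open>e\<^sub>c = P\<^sup>0(N, \<omega>') e\<^sub>j\<close>. If \<open>P\<^sub>m e\<^sub>j = e\<^sub>l\<close>, the \<open>m\<close>-th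
  summand contributes the mass that column \<open>l\<close> of \<open>f(A'\<^sub>m)\<close> puts on the set \<open>S\<close> of states
  that \<open>B\<^sub>m\<close> sends to \<open>c\<close>. That column sums to zero and is positive off the state
  \<open>A'\<^sub>m e\<^sub>l\<close>, which lies in \<open>S\<close>; so the contribution is \<open>\<le> 0\<close>, and \<open>< 0\<close> when
  \<open>f(A'\<^sub>m) \<noteq> 0\<close> and \<open>S\<close> is not all of the state space. The last condition holds
  because \<open>r < N\<close> forces \<open>rank B\<^sub>m \<noteq> 1\<close> (for \<open>r = 0\<close>, \<open>B\<^sub>m = I\<close> and \<open>k \<ge> 2\<close>).
  Hence the \<open>c\<close>-th coordinate of \<open>q\<^sup>(\<^sup>1\<^sup>)(\<omega>)\<close> vanishes only if all \<open>f(A'\<^sub>m)\<close> do.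
  This argument works for every \<open>\<omega>\<close> all of whose entries lie in \<open>\<M>\<close>, a full-measure set.\<close>

lemma matrix_vector_mult_axis_nth: "((A :: real^'n^'m) *v axis j 1) $ i = A $ i $ j"
  by (simp add: matrix_vector_mult_basis column_def)

lemma column_eq_axis_iff:
  "(A :: real^'n^'m) *v axis j 1 = axis i 1 \<longleftrightarrow> (\<forall>r. A $ r $ j = (if r = i then 1 else 0))"
  unfolding vec_eq_iff matrix_vector_mult_axis_nth by (simp add: axis_def)

lemma matrix_add_rdistrib: "((A :: real^'n^'m) + B) ** C = A ** C + B ** C"
  by (vector matrix_matrix_mult_def sum.distrib[symmetric] field_simps)

lemma bounded_bilinear_matrix_mult:
  "bounded_bilinear (\<lambda>(A :: real^'n^'m) (B :: real^'p^'n). A ** B)"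
proof -
  have "bilinear (\<lambda>(A :: real^'n^'m) (B :: real^'p^'n). A ** B)"
    unfolding bilinear_def
    by (auto intro!: linearI simp: matrix_add_ldistrib matrix_add_rdistrib
        matrix_scalar_ac scalar_matrix_assoc)
  then show ?thesis
    by (simp add: bilinear_conv_bounded_bilinear)
qed

lemma sum_matrix_vector_mult: "(\<Sum>m\<in>S. M m) *v v = (\<Sum>m\<in>S. M m *v v)"
  by (induction S rule: infinite_finite_induct) (simp_all add: matrix_vector_mult_add_rdistrib)

lemma zero_one_unique_one_iff_indicator:
  fixes v :: "'k \<Rightarrow> real"
  shows "(\<forall>r. v r = 0 \<or> v r = 1) \<and> (\<exists>!i. v i = 1) \<longleftrightarrow> (\<exists>i. \<forall>r. v r = (if r = i then 1 else 0))"
proof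
  assume "(\<forall>r. v r = 0 \<or> v r = 1) \<and> (\<exists>!i. v i = 1)"
  then obtain i where "v i = 1" and "\<And>r. v r = 0 \<or> v r = 1" and "\<And>r. v r = 1 \<Longrightarrow> r = i"
    by blast
  then have "v r = (if r = i then 1 else 0)" for r
    by (metis zero_neq_one)
  then show "\<exists>i. \<forall>r. v r = (if r = i then 1 else 0)" by blast
next
  assume "\<exists>i. \<forall>r. v r = (if r = i then 1 else 0)"
  then obtain i where v: "\<And>r. v r = (if r = i then 1 else 0)" by blast
  then have "\<exists>!i. v i = 1"
    by (metis zero_neq_one)
  with v show "(\<forall>r. v r = 0 \<or> v r = 1) \<and> (\<exists>!i. v i = 1)"
    by simp
qed

lemma Mset_iff_columns:
  "(A :: 'k::finite mat) \<in> Mset \<longleftrightarrow> (\<forall>j. \<exists>i. A *v axis j 1 = axis i 1)"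
proof -
  have "A \<in> Mset \<longleftrightarrow> (\<forall>j. (\<forall>r. A $ r $ j = 0 \<or> A $ r $ j = 1) \<and> (\<exists>!i. A $ i $ j = 1))"
    unfolding Mset_def by blast
  also have "\<dots> \<longleftrightarrow> (\<forall>j. \<exists>i. \<forall>r. A $ r $ j = (if r = i then 1 else 0))"
    by (simp only: zero_one_unique_one_iff_indicator)
  finally show ?thesis
    by (simp only: column_eq_axis_iff)
qed

lemma mat_1_in_Mset: "mat 1 \<in> (Mset :: 'k::finite mat set)"
  unfolding Mset_iff_columns by auto

lemma matrix_mult_in_Mset: "A \<in> Mset \<Longrightarrow> B \<in> Mset \<Longrightarrow> A ** B \<in> Mset"
  unfolding Mset_iff_columns by (metis matrix_vector_mul_assoc)

lemma Mset_entry_eq_1_iff: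
  assumes "A \<in> Mset" shows "A $ i $ j = 1 \<longleftrightarrow> A *v axis j 1 = axis i 1"
proof -
  from assms obtain i' where "A *v axis j 1 = axis i' 1"
    unfolding Mset_iff_columns by blast
  then show ?thesis
    unfolding column_eq_axis_iff by (metis zero_neq_one)
qed

lemma Mset_row_sum:
  assumes "B \<in> Mset" shows "(B *v v) $ c = (\<Sum>i\<in>{i. B $ c $ i = 1}. v $ i)"
proof -
  have "B $ c $ i = 0 \<or> B $ c $ i = 1" for i
    using assms by (simp add: Mset_def)
  then have "B $ c $ i * v $ i = (if B $ c $ i = 1 then v $ i else 0)" for i
    by (metis mult_eq_0_iff mult_1)
  then have "(B *v v) $ c = (\<Sum>i\<in>UNIV. if B $ c $ i = 1 then v $ i else 0)"
    by (simp add: matrix_vector_mult_def)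
  then show ?thesis
    by (simp add: sum.If_cases)
qed

lemma rank_eq_1_if_row_ones:
  assumes "B \<in> Mset" and "\<forall>i. B $ c $ i = 1"
  shows "rank B = 1"
proof -
  have "B *v axis i 1 = axis c 1" for i
    using assms by (simp add: Mset_entry_eq_1_iff)
  then have "columns B = {axis c 1}"
    unfolding columns_image_basis by (auto simp: image_iff)
  then show ?thesis
    by (simp add: column_rank_def)
qed

lemma finite_Mset: "finite (Mset :: 'k::finite mat set)"
proof -
  have "Mset \<subseteq> range (\<lambda>g :: 'k \<Rightarrow> 'k \<Rightarrow> bool. \<chi> i j. if g i j then (1::real) else 0)"
  proof
    fix A :: "'k mat"
    assume "A \<in> Mset"
    then have "A = (\<chi> i j. if A $ i $ j = 1 then 1 else 0)"
      by (auto simp: Mset_def vec_eq_iff)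
    then show "A \<in> range (\<lambda>g :: 'k \<Rightarrow> 'k \<Rightarrow> bool. \<chi> i j. if g i j then (1::real) else 0)"
      by (rule range_eqI[where x = "\<lambda>i j. A $ i $ j = 1"])
  qed
  then show ?thesis
    by (rule finite_subset) simp
qed

lemma AE_mu_in_Mset: "AE \<omega> in (mu :: (int \<Rightarrow> 'k::finite mat) measure). \<forall>z. \<omega> z \<in> Mset"
  unfolding AE_all_countable mu_def
proof
  fix z :: int
  have "set_pmf (pmf_of_set (Mset :: 'k mat set)) = Mset"
    using mat_1_in_Mset finite_Mset by (intro set_pmf_of_set) auto
  then show "AE \<omega> in PiM UNIV (\<lambda>_. measure_pmf (pmf_of_set (Mset :: 'k mat set))). \<omega> z \<in> Mset"
    by (intro AE_PiM_component) (simp_all add: measure_pmf.prob_space_axioms AE_measure_pmf_iff)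
qed

fun segprod :: "(int \<Rightarrow> 'k::finite mat) \<Rightarrow> int \<Rightarrow> nat \<Rightarrow> 'k mat" where
  "segprod \<omega> a 0 = mat 1"
| "segprod \<omega> a (Suc n) = \<omega> (a + int n) ** segprod \<omega> a n"

lemma segprod_add: "segprod \<omega> a (m + n) = segprod \<omega> (a + int m) n ** segprod \<omega> a m"
  by (induction n) (simp_all add: matrix_mul_assoc add.assoc)

lemma segprod_shift: "segprod (shift b \<omega>) a n = segprod \<omega> (a + b) n"
  by (induction n) (simp_all add: shift_def algebra_simps)

lemma backprod_eq_segprod: "backprod \<omega> n = segprod \<omega> (- int n) n"
proof (induction n)
  case 0
  show ?case by simp
next
  case (Suc n)
  have swap: "- int n - 1 = - 1 - int n"
    by simp
  have "segprod \<omega> (- int (Suc n)) (Suc n) = segprod \<omega> (- int n) n ** \<omega> (- int n - 1)"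
    using segprod_add[of \<omega> "- int (Suc n)" 1 n] by (simp add: add.commute) (simp only: swap)
  with Suc show ?case
    by simp
qed

lemma Peps_0_eq_segprod: "Peps f 0 n \<omega> = segprod \<omega> 0 n"
  by (induction n) simp_all

lemma segprod_in_Mset: "(\<And>z. \<omega> z \<in> Mset) \<Longrightarrow> segprod \<omega> a n \<in> Mset"
  by (induction n) (simp_all add: mat_1_in_Mset matrix_mult_in_Mset)

lemma rank_backprod_less_N0:
  assumes "CARD('k) \<ge> 2" and "r < N0 \<omega>"
  shows "rank (backprod (\<omega> :: int \<Rightarrow> 'k::finite mat) r) \<noteq> 1"
proof (cases "r = 0")
  case True
  with assms(1) show ?thesis
    by (simp add: rank_I)
next
  case False
  with assms(2) have "\<exists>n\<ge>1. rank (backprod \<omega> n) = 1"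
    by (auto simp: N0_def split: if_splits)
  with assms(2) have "r < (LEAST n. n \<ge> 1 \<and> rank (backprod \<omega> n) = 1)"
    by (simp add: N0_def)
  with False show ?thesis
    using not_less_Least by fastforce
qed

lemma has_vector_derivative_Peps:
  "((\<lambda>\<epsilon>. Peps f \<epsilon> n \<omega>) has_vector_derivative
      (\<Sum>m<n. segprod \<omega> (int m + 1) (n - Suc m) ** f (\<omega> (int m)) ** segprod \<omega> 0 m))
    (at 0 within {0..})"
proof (induction n)
  case 0
  show ?case by simp
next
  case (Suc n)
  let ?A = "\<omega> (int n)" and ?F = "f (\<omega> (int n))"
  let ?D = "\<lambda>n. \<Sum>m<n. segprod \<omega> (int m + 1) (n - Suc m) ** f (\<omega> (int m)) ** segprod \<omega> 0 m"
  have "((\<lambda>\<epsilon>. ?A + \<epsilon> *\<^sub>R ?F) has_vector_derivative ?F) (at 0 within {0..})"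
    by (auto intro!: derivative_eq_intros)
  then have factor: "((\<lambda>\<epsilon>. ?A + min \<epsilon> 1 *\<^sub>R ?F) has_vector_derivative ?F) (at 0 within {0..})"
    by (rule has_vector_derivative_transform_within[where d = 1]) (auto simp: dist_real_def)
  have "segprod \<omega> (int m + 1) (Suc n - Suc m) = ?A ** segprod \<omega> (int m + 1) (n - Suc m)"
    if "m < n" for m
  proof -
    from that have "Suc n - Suc m = Suc (n - Suc m)" and "int m + 1 + int (n - Suc m) = int n"
      by auto
    then show ?thesis
      by (simp only: segprod.simps)
  qed
  then have "?D (Suc n) = ?A ** ?D n + ?F ** segprod \<omega> 0 n"
    by (simp add: matrix_mul_assoc bounded_bilinear.sum_right[OF bounded_bilinear_matrix_mult])
  with bounded_bilinear.has_vector_derivative[OF bounded_bilinear_matrix_mult factor Suc]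
  show ?case
    by (simp add: Peps_0_eq_segprod)
qed

lemma P1_eq_sum:
  "P1 f n \<omega> = (\<Sum>m<n. segprod \<omega> (int m + 1) (n - Suc m) ** f (\<omega> (int m)) ** segprod \<omega> 0 m)"
  unfolding P1_def
  by (rule vector_derivative_within[OF _ has_vector_derivative_Peps])
    (simp add: at_within_Ici_at_right)

lemma sum_perturbation_column_nonpos:
  fixes A F :: "'k::finite mat"
  assumes "A \<in> Mset" and "F \<in> M0set" and "F = 0 \<or> (\<forall>i j. F $ i $ j * (1 - 2 * A $ i $ j) > 0)"
    and "A $ l' $ l = 1" and "l' \<in> S"
  shows "(\<Sum>i\<in>S. F $ i $ l) \<le> 0"
    and "F \<noteq> 0 \<Longrightarrow> S \<noteq> UNIV \<Longrightarrow> (\<Sum>i\<in>S. F $ i $ l) < 0"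
proof -
  have "A *v axis l 1 = axis l' 1"
    using assms(1,4) by (simp add: Mset_entry_eq_1_iff)
  then have "A $ i $ l = 0" if "i \<notin> S" for i
    using assms(5) that by (auto simp: column_eq_axis_iff)
  moreover have "F \<noteq> 0 \<Longrightarrow> F $ i $ l * (1 - 2 * A $ i $ l) > 0" for i
    using assms(3) by blast
  ultimately have outside: "F $ i $ l > 0" if "F \<noteq> 0" and "i \<notin> S" for i
    using that by (metis diff_zero mult_zero_right mult.right_neutral)
  have outside_nonneg: "F $ i $ l \<ge> 0" if "i \<notin> S" for i
    using outside[of i] that by (cases "F = 0") auto
  have "(\<Sum>i\<in>UNIV. F $ i $ l) = 0"
    using assms(2) by (simp add: M0set_def)
  then have "(\<Sum>i\<in>S. F $ i $ l) = - (\<Sum>i\<in>UNIV - S. F $ i $ l)"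
    by (simp add: sum.subset_diff[of S UNIV])
  moreover have "(\<Sum>i\<in>UNIV - S. F $ i $ l) \<ge> 0"
    by (rule sum_nonneg) (simp add: outside_nonneg)
  moreover have "(\<Sum>i\<in>UNIV - S. F $ i $ l) > 0" if "F \<noteq> 0" and "S \<noteq> UNIV"
    by (rule sum_pos) (use outside that in auto)
  ultimately show "(\<Sum>i\<in>S. F $ i $ l) \<le> 0" and "F \<noteq> 0 \<Longrightarrow> S \<noteq> UNIV \<Longrightarrow> (\<Sum>i\<in>S. F $ i $ l) < 0"
    by linarith+
qed

lemma perturbation_term_sign:
  fixes A B F P :: "'k::finite mat"
  assumes "A \<in> Mset" and "F \<in> M0set" and "F = 0 \<or> (\<forall>i j. F $ i $ j * (1 - 2 * A $ i $ j) > 0)"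
    and "B \<in> Mset" and "P \<in> Mset" and "rank B \<noteq> 1"
    and "(B ** A ** P) *v axis j 1 = axis c 1"
  shows "((B ** F ** P) *v axis j 1) $ c \<le> 0"
    and "F \<noteq> 0 \<Longrightarrow> ((B ** F ** P) *v axis j 1) $ c < 0"
proof -
  obtain l where l: "P *v axis j 1 = axis l 1"
    using assms(5) unfolding Mset_iff_columns by blast
  obtain l' where l': "A *v axis l 1 = axis l' 1"
    using assms(1) unfolding Mset_iff_columns by blast
  define S where "S = {i. B $ c $ i = 1}"
  have "B *v axis l' 1 = axis c 1"
    using assms(7) l l' by (simp flip: matrix_vector_mul_assoc)
  then have "l' \<in> S"
    using assms(4) by (simp add: S_def Mset_entry_eq_1_iff)
  moreover have "A $ l' $ l = 1"
    using assms(1) l' by (simp add: Mset_entry_eq_1_iff)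
  moreover have "S \<noteq> UNIV"
    using assms(4,6) rank_eq_1_if_row_ones unfolding S_def by blast
  moreover have "((B ** F ** P) *v axis j 1) $ c = (\<Sum>i\<in>S. F $ i $ l)"
    using assms(4) l
    by (simp add: S_def Mset_row_sum matrix_vector_mult_axis_nth flip: matrix_vector_mul_assoc)
  ultimately show "((B ** F ** P) *v axis j 1) $ c \<le> 0"
    and "F \<noteq> 0 \<Longrightarrow> ((B ** F ** P) *v axis j 1) $ c < 0"
    using sum_perturbation_column_nonpos[OF assms(1-3)] by auto
qed

lemma P1_column_eq_0_iff:
  fixes f :: "'k::finite mat \<Rightarrow> 'k mat" and \<omega> :: "int \<Rightarrow> 'k mat"
  assumes f_M0set: "\<forall>A\<in>Mset. f A \<in> M0set"
    and f_sign: "\<forall>A\<in>Mset. f A = 0 \<or> (\<forall>i j. f A $ i $ j * (1 - 2 * A $ i $ j) > 0)"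
    and \<omega>_Mset: "\<And>z. \<omega> z \<in> Mset"
    and rank: "\<And>m. m < n \<Longrightarrow> rank (segprod \<omega> (int m + 1) (n - Suc m)) \<noteq> 1"
  shows "P1 f n \<omega> *v axis j 1 = 0 \<longleftrightarrow> (\<forall>m<n. f (\<omega> (int m)) = 0)"
proof -
  define B where "B m = segprod \<omega> (int m + 1) (n - Suc m)" for m
  define t where "t c m = ((B m ** f (\<omega> (int m)) ** segprod \<omega> 0 m) *v axis j 1) $ c" for c m
  have P1_col: "P1 f n \<omega> *v axis j 1 = (\<Sum>m<n. (B m ** f (\<omega> (int m)) ** segprod \<omega> 0 m) *v axis j 1)"
    by (simp add: P1_eq_sum B_def sum_matrix_vector_mult)
  obtain c where c: "segprod \<omega> 0 n *v axis j 1 = axis c 1"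
    using segprod_in_Mset[of \<omega>, OF \<omega>_Mset] unfolding Mset_iff_columns by blast
  have t_sign: "t c m \<le> 0 \<and> (f (\<omega> (int m)) \<noteq> 0 \<longrightarrow> t c m < 0)" if "m < n" for m
  proof -
    have "segprod \<omega> 0 n = B m ** \<omega> (int m) ** segprod \<omega> 0 m"
      using that segprod_add[of \<omega> 0 "Suc m" "n - Suc m"]
      by (simp add: B_def matrix_mul_assoc add.commute)
    with c have "(B m ** \<omega> (int m) ** segprod \<omega> 0 m) *v axis j 1 = axis c 1"
      by simp
    then show ?thesis
      using perturbation_term_sign[OF \<omega>_Mset bspec[OF f_M0set \<omega>_Mset] bspec[OF f_sign \<omega>_Mset]]
        rank[OF that] segprod_in_Mset[of \<omega>, OF \<omega>_Mset]
      by (simp add: t_def B_def)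
  qed
  have "(\<Sum>m<n. - t c m) = 0 \<longleftrightarrow> (\<forall>m\<in>{..<n}. - t c m = 0)"
    by (rule sum_nonneg_eq_0_iff) (use t_sign in auto)
  then have "(\<Sum>m<n. t c m) = 0 \<longleftrightarrow> (\<forall>m<n. t c m = 0)"
    by (simp add: sum_negf) blast
  also have "\<dots> \<longleftrightarrow> (\<forall>m<n. f (\<omega> (int m)) = 0)"
    using t_sign by (auto simp: t_def)
  finally have sum_t_eq_0_iff: "(\<Sum>m<n. t c m) = 0 \<longleftrightarrow> (\<forall>m<n. f (\<omega> (int m)) = 0)" .
  have "(P1 f n \<omega> *v axis j 1) $ c = (\<Sum>m<n. t c m)"
    by (simp add: P1_col t_def)
  with sum_t_eq_0_iff have "P1 f n \<omega> *v axis j 1 = 0 \<Longrightarrow> \<forall>m<n. f (\<omega> (int m)) = 0"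
    by simp
  moreover have "\<forall>m<n. f (\<omega> (int m)) = 0 \<Longrightarrow> P1 f n \<omega> *v axis j 1 = 0"
    by (simp add: P1_col)
  ultimately show ?thesis
    by blast
qed

lemma q1_eq_0_iff:
  fixes f :: "'k::finite mat \<Rightarrow> 'k mat" and \<omega> :: "int \<Rightarrow> 'k mat"
  assumes card: "CARD('k) \<ge> 2"
    and f_M0set: "\<forall>A\<in>Mset. f A \<in> M0set"
    and f_sign: "\<forall>A\<in>Mset. f A = 0 \<or> (\<forall>i j. f A $ i $ j * (1 - 2 * A $ i $ j) > 0)"
    and \<omega>_Mset: "\<And>z. \<omega> z \<in> Mset"
  shows "q1 f i1 \<omega> = 0 \<longleftrightarrow> (\<forall>m\<in>{1..N0 \<omega>}. f (\<omega> (- int m)) = 0)"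
proof -
  define N where "N = N0 \<omega>"
  define \<omega>' where "\<omega>' = shift (- int N) \<omega>"
  have \<omega>'_Mset: "\<omega>' z \<in> Mset" for z
    using \<omega>_Mset by (simp add: \<omega>'_def shift_def)
  have "rank (segprod \<omega>' (int m + 1) (N - Suc m)) \<noteq> 1" if "m < N" for m
  proof -
    from that have "- int (N - Suc m) = int m + 1 + - int N"
      by simp
    then have "segprod \<omega>' (int m + 1) (N - Suc m) = backprod \<omega> (N - Suc m)"
      by (simp only: \<omega>'_def segprod_shift backprod_eq_segprod)
    with that rank_backprod_less_N0[OF card] show ?thesis
      by (simp add: N_def)
  qed
  then have "q1 f i1 \<omega> = 0 \<longleftrightarrow> (\<forall>m<N. f (\<omega>' (int m)) = 0)"
    using P1_column_eq_0_iff[OF f_M0set f_sign \<omega>'_Mset]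
    by (simp add: q1_def Let_def N_def[symmetric] \<omega>'_def[symmetric])
  also have "\<dots> \<longleftrightarrow> (\<forall>m\<in>{1..N}. f (\<omega> (- int m)) = 0)"
  proof safe
    fix m
    assume "\<forall>m<N. f (\<omega>' (int m)) = 0" and "m \<in> {1..N}"
    moreover from \<open>m \<in> {1..N}\<close> have "N - m < N"
      by simp
    ultimately have "f (\<omega>' (int (N - m))) = 0"
      by blast
    with \<open>m \<in> {1..N}\<close> show "f (\<omega> (- int m)) = 0"
      by (simp add: \<omega>'_def shift_def of_nat_diff)
  next
    fix m
    assume "\<forall>m\<in>{1..N}. f (\<omega> (- int m)) = 0" and "m < N"
    moreover from \<open>m < N\<close> have "N - m \<in> {1..N}"
      by simp
    ultimately have "f (\<omega> (- int (N - m))) = 0"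
      by blast
    with \<open>m < N\<close> show "f (\<omega>' (int m)) = 0"
      by (simp add: \<omega>'_def shift_def of_nat_diff)
  qed
  finally show ?thesis
    by (simp add: N_def)
qed

theorem proposition6p2:
  fixes f :: "'k::finite mat \<Rightarrow> 'k mat" and i1 :: 'k
  assumes "CARD('k) \<ge> 2"
    and "\<forall>A\<in>Mset. f A \<in> M0set"
    and "\<forall>A\<in>Mset. colnorm (f A) \<le> 1"
    and "\<forall>A\<in>Mset. f A = 0 \<or> (\<forall>i j. f A $ i $ j * (1 - 2 * A $ i $ j) > 0)"
  shows "AE \<omega> in mu. (q1 f i1 \<omega> = 0 \<longleftrightarrow> (\<forall>m\<in>{1..N0 \<omega>}. f (\<omega> (- int m)) = 0))"
  using AE_mu_in_Mset by eventually_elim (simp add: q1_eq_0_iff[OF assms(1,2,4)])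

end
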